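(* Let $\ell>0$, $m\in\mathbb N^*$ and $\lambda\in(0,m^2]$. Then the only solution $h\in C^4([-\ell,\ell])$ of \[ h^{(iv)}(y)+(\lambda-2m^2)h''(y)+m^2(m^2-\lambda)h(y)=0 \text{ on } (-\ell,\ell),\qquad h(\pm\ell)=h'(\pm\ell)=0, \] is $h\equiv 0$. Consequently, every eigenvalue $\lambda$ of the mixed buckling problem on $\Omega_\ell=(0,\pi)\times(-\ell,\ell)$ (with $u=0$ on $\partial\Omega_\ell$, $u_y=0$ on $y=\pm\ell$, $u_{xx}=0$ on $x\in\{0,\pi\}$) whose eigenfunction $u(x,y)=\sum_{m\ge1}h_m(y)\sin(mx)$ has a nonzero coefficient $h_m$ satisfies $\lambda>m^2$.
   Context: The mixed buckling problem on $\Omega_\ell$ is $\Delta^2u=-\lambda\Delta u$ in $\Omega_\ell$ with the boundary conditions stated. Each Fourier coefficient $h_m$ of an eigenfunction satisfies the displayed ODE together with $h_m(\pm\ell)=h_m'(\pm\ell)=0$. *)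

theory Defs
  imports "HOL-Analysis.Analysis"
begin

definition C4_on :: "real \<Rightarrow> (real \<Rightarrow> real) \<Rightarrow> (real \<Rightarrow> real) \<Rightarrow> (real \<Rightarrow> real)
    \<Rightarrow> (real \<Rightarrow> real) \<Rightarrow> (real \<Rightarrow> real) \<Rightarrow> bool" where
  "C4_on l h h1 h2 h3 h4 \<longleftrightarrow>
     (\<forall>y\<in>{-l..l}. (h has_real_derivative h1 y) (at y within {-l..l})
                 \<and> (h1 has_real_derivative h2 y) (at y within {-l..l})
                 \<and> (h2 has_real_derivative h3 y) (at y within {-l..l})
                 \<and> (h3 has_real_derivative h4 y) (at y within {-l..l}))
     \<and> continuous_on {-l..l} h4"

definition mode_solution :: "real \<Rightarrow> nat \<Rightarrow> real \<Rightarrow> (real \<Rightarrow> real) \<Rightarrow> bool" where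
  "mode_solution l m lam h \<longleftrightarrow>
     (\<exists>h1 h2 h3 h4. C4_on l h h1 h2 h3 h4
        \<and> (\<forall>y\<in>{-l<..<l}. h4 y + (lam - 2 * (real m)^2) * h2 y
                            + (real m)^2 * ((real m)^2 - lam) * h y = 0)
        \<and> h l = 0 \<and> h (-l) = 0 \<and> h1 l = 0 \<and> h1 (-l) = 0)"

end

theory Submission
  imports Defs
begin

text \<open>Writing the equation as \<open>h'''' - c h'' + k h = 0\<close> with \<open>c = 2m\<^sup>2 - \<lambda> > 0\<close> and
\<open>k = m\<^sup>2(m\<^sup>2 - \<lambda>) \<ge> 0\<close>, the energy \<open>G = h''' h - h'' h' - c h' h\<close> satisfies
\<open>G' = -(h''\<^sup>2 + c h'\<^sup>2 + k h\<^sup>2) \<le> 0\<close> and vanishes at both clamped ends. Hence \<open>G\<close> is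
identically zero, so \<open>G' = 0\<close>, which forces \<open>h' = 0\<close> and thus \<open>h = h(\<plusminus>\<ell>) = 0\<close>.\<close>

lemma deriv_zero_if_nonpos_and_vanishing_ends:
  fixes G G' :: "real \<Rightarrow> real"
  assumes cont: "continuous_on {a..b} G"
    and deriv: "\<And>x. x \<in> {a<..<b} \<Longrightarrow> (G has_real_derivative G' x) (at x)"
    and nonpos: "\<And>x. x \<in> {a<..<b} \<Longrightarrow> G' x \<le> 0"
    and ends: "G a = 0" "G b = 0"
    and x: "x \<in> {a<..<b}"
  shows "G' x = 0"
proof -
  have antitone: "G v \<le> G u" if "a \<le> u" "u \<le> v" "v \<le> b" for u v
  proof (rule DERIV_nonpos_imp_decreasing_open[OF \<open>u \<le> v\<close>])
    fix z assume "u < z" "z < v"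
    with that have "z \<in> {a<..<b}" by auto
    then show "\<exists>y. DERIV G z :> y \<and> y \<le> 0" using deriv nonpos by blast
  next
    show "continuous_on {u..v} G" using cont by (rule continuous_on_subset) (use that in auto)
  qed
  have zero: "G y = 0" if "y \<in> {a..b}" for y
    using antitone[of a y] antitone[of y b] that ends by force
  show ?thesis
  proof (rule DERIV_local_const[OF deriv[OF x]])
    show "0 < min (x - a) (b - x)" using x by auto
    show "\<forall>z. \<bar>x - z\<bar> < min (x - a) (b - x) \<longrightarrow> G x = G z"
      using x by (auto intro!: trans[OF zero zero[symmetric]])
  qed
qed

lemma energy_has_derivative:
  fixes h h1 h2 h3 :: "real \<Rightarrow> real"
  assumes "(h has_real_derivative h1 y) (at y within S)" "(h1 has_real_derivative h2 y) (at y within S)"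
    and "(h2 has_real_derivative h3 y) (at y within S)" "(h3 has_real_derivative h4 y) (at y within S)"
  shows "((\<lambda>y. h3 y * h y - h2 y * h1 y - c * (h1 y * h y)) has_real_derivative
           h4 y * h y - (h2 y)\<^sup>2 - c * (h2 y * h y + (h1 y)\<^sup>2)) (at y within S)"
  using DERIV_diff[OF DERIV_diff[OF DERIV_mult[OF assms(4,1)] DERIV_mult[OF assms(3,2)]]
                      DERIV_cmult[OF DERIV_mult[OF assms(2,1)], of c]]
  by (rule DERIV_cong) (simp add: algebra_simps power2_eq_square)

lemma has_real_derivative_at_interior_Icc:
  assumes "(f has_real_derivative f' x) (at x within {a..b})" "x \<in> {a<..<b}"
  shows "(f has_real_derivative f' x) (at x)"
  using assms at_within_Icc_at[of a x b] by auto

lemma clamped_solution_vanishes: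
  fixes h h1 h2 h3 h4 :: "real \<Rightarrow> real" and c k :: real
  assumes C: "C4_on l h h1 h2 h3 h4"
    and ode: "\<And>y. y \<in> {-l<..<l} \<Longrightarrow> h4 y - c * h2 y + k * h y = 0"
    and c: "c > 0" and k: "k \<ge> 0"
    and bc: "h l = 0" "h (-l) = 0" "h1 l = 0" "h1 (-l) = 0"
    and y: "y \<in> {-l..l}"
  shows "h y = 0"
proof -
  note D = C[unfolded C4_on_def, THEN conjunct1, rule_format]
  define G where "G y = h3 y * h y - h2 y * h1 y - c * (h1 y * h y)" for y
  define G' where "G' y = h4 y * h y - (h2 y)\<^sup>2 - c * (h2 y * h y + (h1 y)\<^sup>2)" for y
  have DG: "(G has_real_derivative G' x) (at x within {-l..l})" if "x \<in> {-l..l}" for x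
    unfolding G_def G'_def using D[OF that] by (intro energy_has_derivative) auto
  have G'_eq: "G' x = - ((h2 x)\<^sup>2 + c * (h1 x)\<^sup>2 + k * (h x)\<^sup>2)" if "x \<in> {-l<..<l}" for x
  proof -
    have "h4 x = c * h2 x - k * h x" using ode[OF that] by simp
    then show ?thesis unfolding G'_def by (simp add: power2_eq_square) argo
  qed
  have squares_nonneg: "c * (h1 x)\<^sup>2 \<ge> 0" "k * (h x)\<^sup>2 \<ge> 0" for x
    using c k by auto
  have h1_zero: "h1 x = 0" if x: "x \<in> {-l<..<l}" for x
  proof -
    have "G' x = 0"
    proof (rule deriv_zero_if_nonpos_and_vanishing_ends[OF _ _ _ _ _ x])
      show "continuous_on {-l..l} G" using DG by (rule DERIV_continuous_on)
      show "G (-l) = 0" "G l = 0" unfolding G_def using bc by auto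
      show "(G has_real_derivative G' z) (at z)" if "z \<in> {-l<..<l}" for z
        using DG that by (intro has_real_derivative_at_interior_Icc) auto
      show "G' z \<le> 0" if "z \<in> {-l<..<l}" for z
        using G'_eq[OF that] squares_nonneg[of z] by (smt (verit) zero_le_power2)
    qed
    then have "c * (h1 x)\<^sup>2 = 0"
      using G'_eq[OF x] squares_nonneg[of x] by (smt (verit) zero_le_power2)
    then show ?thesis using c by simp
  qed
  show ?thesis
  proof (cases "y = -l")
    case False
    with y have "-l < l" by auto
    have "h y = h (-l)"
    proof (rule DERIV_isconst2[OF \<open>-l < l\<close>])
      show "continuous_on {-l..l} h" using D by (intro DERIV_continuous_on) blast
      fix x assume "-l < x" "x < l"
      then have x: "x \<in> {-l<..<l}" by auto
      have "(h has_real_derivative h1 x) (at x)"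
        using D[of x] x by (intro has_real_derivative_at_interior_Icc) auto
      then show "DERIV h x :> 0" using h1_zero[OF x] by simp
    qed (use y in auto)
    then show ?thesis using bc by simp
  qed (use bc in simp)
qed

theorem mainTheorem2:
  fixes l :: real and m :: nat
  assumes "l > 0" and "m \<ge> 1"
  shows "(\<forall>lam h. 0 < lam \<and> lam \<le> (real m)^2 \<and> mode_solution l m lam h
              \<longrightarrow> (\<forall>y\<in>{-l..l}. h y = 0))
       \<and> (\<forall>lam h. 0 < lam \<and> mode_solution l m lam h \<and> (\<exists>y\<in>{-l..l}. h y \<noteq> 0)
              \<longrightarrow> lam > (real m)^2)"
proof -
  have vanishes: "h y = 0"
    if lam: "0 < lam" "lam \<le> (real m)\<^sup>2" and sol: "mode_solution l m lam h" and y: "y \<in> {-l..l}"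
    for lam h y
  proof -
    obtain h1 h2 h3 h4 where C: "C4_on l h h1 h2 h3 h4"
      and ode: "\<forall>y\<in>{-l<..<l}. h4 y + (lam - 2 * (real m)^2) * h2 y
                                 + (real m)^2 * ((real m)^2 - lam) * h y = 0"
      and bc: "h l = 0" "h (-l) = 0" "h1 l = 0" "h1 (-l) = 0"
      using sol unfolding mode_solution_def by blast
    show ?thesis
    proof (rule clamped_solution_vanishes[OF C _ _ _ bc y,
             where c = "2 * (real m)\<^sup>2 - lam" and k = "(real m)\<^sup>2 * ((real m)\<^sup>2 - lam)"])
      show "h4 x - (2 * (real m)\<^sup>2 - lam) * h2 x + (real m)\<^sup>2 * ((real m)\<^sup>2 - lam) * h x = 0"
        if "x \<in> {-l<..<l}" for x
        using ode that by (simp add: algebra_simps)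
      show "2 * (real m)\<^sup>2 - lam > 0" using lam \<open>m \<ge> 1\<close> by simp
      show "(real m)\<^sup>2 * ((real m)\<^sup>2 - lam) \<ge> 0" using lam by simp
    qed
  qed
  then show ?thesis by (meson not_less)
qed

end
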